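(* Let $f,g,h$ be smooth real functions of one variable with $f\neq 0$, $g\neq 0$, $g'\neq 0$. Then the equation $$u_t-f(u)u_x-g(u)u_{xx}+h(u)u_x^2=0$$ is quasi self-adjoint with the substitution $$\phi(u)=M\exp\left(-\int\frac{g'(u)+h(u)}{g(u)}\,du\right),$$ where $M\neq 0$ is a constant.
   Context: For a differential equation $\mathfrak{F}[u]=0$ in independent variables $t,x$ and dependent variable $u$, introduce a new dependent variable $\nu=\nu(t,x)$. The formal Lagrangian is $\mathfrak{L}=\nu\mathfrak{F}$ and the adjoint is $\mathfrak{F}^*=\frac{\delta\mathfrak{L}}{\delta u}$, where $\frac{\delta}{\delta u}=\frac{\partial}{\partial u}-D_t\frac{\partial}{\partial u_t}-D_x\frac{\partial}{\partial u_x}+D_x^2\frac{\partial}{\partial u_{xx}}$ and $D_t,D_x$ are total derivatives. The equation is quasi self-adjoint if there is a substitution $\nu=\phi(u)\neq 0$ (derivatives of $\nu$ replaced by total derivatives of $\phi(u)$) such that $\mathfrak{F}^*|_{\nu=\phi(u)}=\lambda\mathfrak{F}$ for some coefficient $\lambda=\lambda(t,x,u,\dots)$. *)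

theory Defs
  imports "HOL-Analysis.Analysis"
begin

definition pdt :: "(real \<Rightarrow> real \<Rightarrow> real) \<Rightarrow> real \<Rightarrow> real \<Rightarrow> real" where
  "pdt w t x = deriv (\<lambda>s. w s x) t"

definition pdx :: "(real \<Rightarrow> real \<Rightarrow> real) \<Rightarrow> real \<Rightarrow> real \<Rightarrow> real" where
  "pdx w t x = deriv (\<lambda>y. w t y) x"

fun iterD :: "bool list \<Rightarrow> (real \<Rightarrow> real \<Rightarrow> real) \<Rightarrow> (real \<Rightarrow> real \<Rightarrow> real)" where
  "iterD [] w = w"
| "iterD (b # bs) w = (if b then pdt else pdx) (iterD bs w)"

definition smooth2 :: "(real \<Rightarrow> real \<Rightarrow> real) \<Rightarrow> bool" where
  "smooth2 w \<longleftrightarrow> (\<forall>bs p. (\<lambda>q. iterD bs w (fst q) (snd q)) differentiable (at p))"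

definition smooth1 :: "(real \<Rightarrow> real) \<Rightarrow> bool" where
  "smooth1 f \<longleftrightarrow> (\<forall>n z. ((deriv ^^ n) f) differentiable (at z))"

text \<open>A second-order differential function F(t,x,u,u_t,u_x,u_xx) and its formal
  Lagrangian L(t,x,nu,u,u_t,u_x,u_xx) = nu * F(t,x,u,u_t,u_x,u_xx).\<close>
type_synonym difffun = "real \<Rightarrow> real \<Rightarrow> real \<Rightarrow> real \<Rightarrow> real \<Rightarrow> real \<Rightarrow> real"
type_synonym lagr = "real \<Rightarrow> real \<Rightarrow> real \<Rightarrow> real \<Rightarrow> real \<Rightarrow> real \<Rightarrow> real \<Rightarrow> real"

definition formal_lagrangian :: "difffun \<Rightarrow> lagr" where
  "formal_lagrangian F = (\<lambda>t x v w wt wx wxx. v * F t x w wt wx wxx)"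

text \<open>Variational derivative delta L / delta u, evaluated along given functions
  u(t,x) and nu(t,x); the total derivatives D_t, D_x evaluated along (u,nu) are the
  partial derivatives of the composite functions of (t,x).\<close>
definition euler_u :: "lagr \<Rightarrow> (real \<Rightarrow> real \<Rightarrow> real) \<Rightarrow> (real \<Rightarrow> real \<Rightarrow> real) \<Rightarrow> real \<Rightarrow> real \<Rightarrow> real" where
  "euler_u L u \<nu> t x =
     deriv (\<lambda>p. L t x (\<nu> t x) p (pdt u t x) (pdx u t x) (pdx (pdx u) t x)) (u t x)
   - pdt (\<lambda>t x. deriv (\<lambda>p. L t x (\<nu> t x) (u t x) p (pdx u t x) (pdx (pdx u) t x)) (pdt u t x)) t x
   - pdx (\<lambda>t x. deriv (\<lambda>p. L t x (\<nu> t x) (u t x) (pdt u t x) p (pdx (pdx u) t x)) (pdx u t x)) t x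
   + pdx (pdx (\<lambda>t x. deriv (\<lambda>p. L t x (\<nu> t x) (u t x) (pdt u t x) (pdx u t x) p) (pdx (pdx u) t x))) t x"

definition adjoint :: "difffun \<Rightarrow> (real \<Rightarrow> real \<Rightarrow> real) \<Rightarrow> (real \<Rightarrow> real \<Rightarrow> real) \<Rightarrow> real \<Rightarrow> real \<Rightarrow> real" where
  "adjoint F u \<nu> = euler_u (formal_lagrangian F) u \<nu>"

definition quasi_self_adjoint_with :: "difffun \<Rightarrow> (real \<Rightarrow> real) \<Rightarrow> bool" where
  "quasi_self_adjoint_with F \<phi> \<longleftrightarrow>
     (\<forall>w. \<phi> w \<noteq> 0) \<and>
     (\<exists>\<Lambda> :: real \<Rightarrow> real \<Rightarrow> real \<Rightarrow> real \<Rightarrow> real \<Rightarrow> real \<Rightarrow> real \<Rightarrow> real \<Rightarrow> real.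
        \<forall>u. smooth2 u \<longrightarrow> (\<forall>t x.
          adjoint F u (\<lambda>t x. \<phi> (u t x)) t x =
            \<Lambda> t x (u t x) (pdt u t x) (pdx u t x) (pdt (pdt u) t x) (pdt (pdx u) t x) (pdx (pdx u) t x)
            * F t x (u t x) (pdt u t x) (pdx u t x) (pdx (pdx u) t x)))"

end

theory Submission
  imports Defs
begin

text \<open>With \<nu> = \<phi>(u) and \<phi>' = -\<phi> (g' + h) / g one has (\<phi> g)' = -\<phi> h, so the
  term D_x^2(-\<nu> g) of the adjoint collapses to D_x(\<phi> h u_x). Expanding the remaining
  total derivatives then leaves F^* = -\<phi>' (u_t - f u_x + h u_x^2) - \<phi> (g' + h) u_xx,
  which is \<phi> (g' + h) / g times F.\<close>

lemma has_real_derivative_pdx: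
  assumes "(\<lambda>q. v (fst q) (snd q)) differentiable (at (t, x))"
  shows "((\<lambda>y. v t y) has_real_derivative pdx v t x) (at x)"
proof -
  have "(\<lambda>y. (t, y)) differentiable (at x)"
    by (auto intro!: derivative_intros)
  then have "((\<lambda>q. v (fst q) (snd q)) \<circ> (\<lambda>y. (t, y))) differentiable (at x)"
    using assms by (intro differentiable_chain_at) auto
  then show ?thesis
    unfolding pdx_def by (simp add: o_def DERIV_deriv_iff_real_differentiable)
qed

lemma has_real_derivative_pdt:
  assumes "(\<lambda>q. v (fst q) (snd q)) differentiable (at (t, x))"
  shows "((\<lambda>s. v s x) has_real_derivative pdt v t x) (at t)"
proof -
  have "(\<lambda>s. (s, x)) differentiable (at t)"
    by (auto intro!: derivative_intros)
  then have "((\<lambda>q. v (fst q) (snd q)) \<circ> (\<lambda>s. (s, x))) differentiable (at t)"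
    using assms by (intro differentiable_chain_at) auto
  then show ?thesis
    unfolding pdt_def by (simp add: o_def DERIV_deriv_iff_real_differentiable)
qed

lemma smooth1_differentiable:
  assumes "smooth1 f"
  shows "f differentiable (at z)"
  using assms[unfolded smooth1_def, rule_format, of 0 z] by simp

lemma has_real_derivative_compose_eq:
  assumes "\<And>z. (F has_real_derivative F' z) (at z)"
    and "(G has_real_derivative G') (at y)"
    and "D = F' (G y) * G'"
  shows "((\<lambda>y. F (G y)) has_real_derivative D) (at y)"
  using DERIV_chain2[OF assms(1) assms(2)] assms(3) by simp

definition nonlinear_diffusion :: "(real \<Rightarrow> real) \<Rightarrow> (real \<Rightarrow> real) \<Rightarrow> (real \<Rightarrow> real) \<Rightarrow> difffun" where
  "nonlinear_diffusion f g h = (\<lambda>t x w wt wx wxx. wt - f w * wx - g w * wxx + h w * wx ^ 2)"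

lemma adjoint_nonlinear_diffusion:
  assumes "\<And>z. f differentiable (at z)" and "\<And>z. g differentiable (at z)"
    and "\<And>z. h differentiable (at z)"
  shows "adjoint (nonlinear_diffusion f g h) u \<nu> t x =
      \<nu> t x * (- deriv f (u t x) * pdx u t x - deriv g (u t x) * pdx (pdx u) t x
                + deriv h (u t x) * (pdx u t x)\<^sup>2)
    - pdt \<nu> t x
    - pdx (\<lambda>t x. \<nu> t x * (2 * h (u t x) * pdx u t x - f (u t x))) t x
    + pdx (pdx (\<lambda>t x. - (\<nu> t x * g (u t x)))) t x"
proof -
  have df: "\<And>z. (f has_real_derivative deriv f z) (at z)"
    and dg: "\<And>z. (g has_real_derivative deriv g z) (at z)"
    and dh: "\<And>z. (h has_real_derivative deriv h z) (at z)"
    using assms by (simp_all add: DERIV_deriv_iff_real_differentiable)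
  have L_u: "deriv (\<lambda>p. \<nu> t x * (pdt u t x - f p * pdx u t x - g p * pdx (pdx u) t x
                 + h p * (pdx u t x)\<^sup>2)) (u t x)
      = \<nu> t x * (- deriv f (u t x) * pdx u t x - deriv g (u t x) * pdx (pdx u) t x
                + deriv h (u t x) * (pdx u t x)\<^sup>2)"
    by (rule DERIV_imp_deriv) (auto intro!: derivative_eq_intros df dg dh simp: algebra_simps)
  have L_ut: "(\<lambda>t x. deriv (\<lambda>p. \<nu> t x * (p - f (u t x) * pdx u t x - g (u t x) * pdx (pdx u) t x
                 + h (u t x) * (pdx u t x)\<^sup>2)) (pdt u t x)) = \<nu>"
    by (intro ext DERIV_imp_deriv) (auto intro!: derivative_eq_intros)
  have L_ux: "(\<lambda>t x. deriv (\<lambda>p. \<nu> t x * (pdt u t x - f (u t x) * p - g (u t x) * pdx (pdx u) t x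
                 + h (u t x) * p\<^sup>2)) (pdx u t x))
      = (\<lambda>t x. \<nu> t x * (2 * h (u t x) * pdx u t x - f (u t x)))"
    by (intro ext DERIV_imp_deriv) (auto intro!: derivative_eq_intros simp: algebra_simps)
  have L_uxx: "(\<lambda>t x. deriv (\<lambda>p. \<nu> t x * (pdt u t x - f (u t x) * pdx u t x - g (u t x) * p
                 + h (u t x) * (pdx u t x)\<^sup>2)) (pdx (pdx u) t x))
      = (\<lambda>t x. - (\<nu> t x * g (u t x)))"
    by (intro ext DERIV_imp_deriv) (auto intro!: derivative_eq_intros)
  show ?thesis
    unfolding adjoint_def euler_u_def formal_lagrangian_def nonlinear_diffusion_def
    by (simp only: L_u L_ut L_ux L_uxx)
qed

lemma adjoint_nonlinear_diffusion_substitution: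
  assumes f: "\<And>z. f differentiable (at z)" and g: "\<And>z. g differentiable (at z)"
    and h: "\<And>z. h differentiable (at z)" and g_nonzero: "\<And>z. g z \<noteq> 0"
    and d\<phi>: "\<And>z. (\<phi> has_real_derivative - \<phi> z * (deriv g z + h z) / g z) (at z)"
    and u: "smooth2 u"
  shows "adjoint (nonlinear_diffusion f g h) u (\<lambda>t x. \<phi> (u t x)) t x =
    \<phi> (u t x) * (deriv g (u t x) + h (u t x)) / g (u t x)
    * nonlinear_diffusion f g h t x (u t x) (pdt u t x) (pdx u t x) (pdx (pdx u) t x)"
proof -
  define Q where "Q z = (deriv g z + h z) / g z" for z
  have df: "\<And>z. (f has_real_derivative deriv f z) (at z)"
    and dg: "\<And>z. (g has_real_derivative deriv g z) (at z)"
    and dh: "\<And>z. (h has_real_derivative deriv h z) (at z)"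
    using f g h by (simp_all add: DERIV_deriv_iff_real_differentiable)
  have d\<phi>Q: "\<And>z. (\<phi> has_real_derivative - \<phi> z * Q z) (at z)"
    using d\<phi> by (simp add: Q_def)
  have jet: "\<And>bs p. (\<lambda>q. iterD bs u (fst q) (snd q)) differentiable (at p)"
    using u unfolding smooth2_def by blast
  have u_t: "((\<lambda>s. u s x) has_real_derivative pdt u t x) (at t)"
    using has_real_derivative_pdt[OF jet[of "[]"]] by simp
  have u_x: "\<And>t y. ((\<lambda>y. u t y) has_real_derivative pdx u t y) (at y)"
    using has_real_derivative_pdx[OF jet[of "[]"]] by simp
  have u_xx: "\<And>y. ((\<lambda>y. pdx u t y) has_real_derivative pdx (pdx u) t y) (at y)"
    using has_real_derivative_pdx[OF jet[of "[False]"]] by simp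
  note chain = has_real_derivative_compose_eq[OF d\<phi>Q]
    has_real_derivative_compose_eq[OF df] has_real_derivative_compose_eq[OF dg]
    has_real_derivative_compose_eq[OF dh]
  have \<nu>_t: "pdt (\<lambda>t x. \<phi> (u t x)) t x = - \<phi> (u t x) * Q (u t x) * pdt u t x"
    unfolding pdt_def by (rule DERIV_imp_deriv, rule chain(1)[OF u_t]) (simp add: pdt_def)
  have flux_x: "pdx (\<lambda>t x. \<phi> (u t x) * (2 * h (u t x) * pdx u t x - f (u t x))) t x
      = - \<phi> (u t x) * Q (u t x) * pdx u t x * (2 * h (u t x) * pdx u t x - f (u t x))
        + \<phi> (u t x) * (2 * deriv h (u t x) * (pdx u t x)\<^sup>2 + 2 * h (u t x) * pdx (pdx u) t x
           - deriv f (u t x) * pdx u t x)"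
    unfolding pdx_def[of "\<lambda>t x. \<phi> (u t x) * (2 * h (u t x) * pdx u t x - f (u t x))"]
    by (rule DERIV_imp_deriv)
      (auto intro!: derivative_eq_intros chain u_x u_xx simp: algebra_simps power2_eq_square)
  have d\<phi>g: "\<And>z. ((\<lambda>z. \<phi> z * g z) has_real_derivative - \<phi> z * h z) (at z)"
    by (auto intro!: derivative_eq_intros d\<phi>Q dg simp: Q_def field_simps g_nonzero)
  have \<phi>g_x: "pdx (\<lambda>t x. - (\<phi> (u t x) * g (u t x))) = (\<lambda>t x. \<phi> (u t x) * h (u t x) * pdx u t x)"
    unfolding pdx_def[of "\<lambda>t x. - (\<phi> (u t x) * g (u t x))"]
    by (intro ext DERIV_imp_deriv)
      (auto intro!: derivative_eq_intros has_real_derivative_compose_eq[OF d\<phi>g] u_x)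
  have \<phi>g_xx: "pdx (\<lambda>t x. \<phi> (u t x) * h (u t x) * pdx u t x) t x
      = - \<phi> (u t x) * Q (u t x) * h (u t x) * (pdx u t x)\<^sup>2
        + \<phi> (u t x) * deriv h (u t x) * (pdx u t x)\<^sup>2 + \<phi> (u t x) * h (u t x) * pdx (pdx u) t x"
    unfolding pdx_def[of "\<lambda>t x. \<phi> (u t x) * h (u t x) * pdx u t x"]
    by (rule DERIV_imp_deriv)
      (auto intro!: derivative_eq_intros chain u_x u_xx simp: algebra_simps power2_eq_square)
  show ?thesis
    unfolding adjoint_nonlinear_diffusion[OF f g h] \<nu>_t flux_x \<phi>g_x \<phi>g_xx
    by (simp add: nonlinear_diffusion_def Q_def field_simps g_nonzero power2_eq_square)
qed

lemma quasi_self_adjoint_nonlinear_diffusion: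
  assumes f: "\<And>z. f differentiable (at z)" and g: "\<And>z. g differentiable (at z)"
    and h: "\<And>z. h differentiable (at z)" and g_nonzero: "\<And>z. g z \<noteq> 0"
    and \<phi>_nonzero: "\<And>z. \<phi> z \<noteq> 0"
    and d\<phi>: "\<And>z. (\<phi> has_real_derivative - \<phi> z * (deriv g z + h z) / g z) (at z)"
  shows "quasi_self_adjoint_with (nonlinear_diffusion f g h) \<phi>"
  unfolding quasi_self_adjoint_with_def
proof (intro conjI exI allI impI)
  fix u t x
  assume "smooth2 u"
  then show "adjoint (nonlinear_diffusion f g h) u (\<lambda>t x. \<phi> (u t x)) t x =
    (\<lambda>t x w wt wx wtt wtx wxx. \<phi> w * (deriv g w + h w) / g w)
      t x (u t x) (pdt u t x) (pdx u t x) (pdt (pdt u) t x) (pdt (pdx u) t x) (pdx (pdx u) t x)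
    * nonlinear_diffusion f g h t x (u t x) (pdt u t x) (pdx u t x) (pdx (pdx u) t x)"
    using adjoint_nonlinear_diffusion_substitution[OF f g h g_nonzero d\<phi>] by simp
qed (use \<phi>_nonzero in blast)

theorem corollary1:
  fixes f g h P :: "real \<Rightarrow> real" and M :: real
  assumes "smooth1 f" and "smooth1 g" and "smooth1 h"
    and "\<forall>z. f z \<noteq> 0" and "\<forall>z. g z \<noteq> 0" and "\<forall>z. deriv g z \<noteq> 0"
    and "\<forall>z. (P has_real_derivative ((deriv g z + h z) / g z)) (at z)"
    and "M \<noteq> 0"
  shows "quasi_self_adjoint_with
           (\<lambda>t x w wt wx wxx. wt - f w * wx - g w * wxx + h w * wx ^ 2)
           (\<lambda>w. M * exp (- P w))"
proof -
  have "\<And>z. ((\<lambda>w. M * exp (- P w)) has_real_derivative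
      - (M * exp (- P z)) * (deriv g z + h z) / g z) (at z)"
    using assms(7) by (auto intro!: derivative_eq_intros)
  then show ?thesis
    using quasi_self_adjoint_nonlinear_diffusion[of f g h "\<lambda>w. M * exp (- P w)"]
      smooth1_differentiable assms(1-3,5,8)
    unfolding nonlinear_diffusion_def by auto
qed

end
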